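(* Let $C_1,C_2\subseteq\mathbb{R}^d$ be convex polyhedral sets with $C_1\cap C_2\neq\emptyset$. Then there exists a constant $M>0$ such that for all $x\in C_1$ and $y\in C_2$, $$\Big\|\mathrm{proj}_{C_1}(x)+\mathrm{proj}_{C_2}(y)-2\,\mathrm{proj}_{C_1\cap C_2}\Big(\frac{x+y}{2}\Big)\Big\|\le M\,\|\mathrm{proj}_{C_1}(x)-\mathrm{proj}_{C_2}(y)\|.$$
   Context: $\|\cdot\|$ is the Euclidean norm and $\mathrm{proj}_C(z)=\arg\min_{u\in C}\|z-u\|$ is the Euclidean projection onto a nonempty closed convex set $C$. A convex polyhedral set is a finite intersection of closed half-spaces. *)

theory Defs
  imports "HOL-Analysis.Analysis"
begin

end

theory Submission
  imports Defs
begin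

(* The midpoint z of x \<in> C1 and y \<in> C2 lies within |x - y|/2 of both sets, so each linear
   constraint describing C1 \<inter> C2 is violated at z by at most L |x - y|/2, and Hoffman's error
   bound gives dist z (C1 \<inter> C2) \<le> K L |x - y|/2.
   Hoffman's bound: if p is the projection of z onto the polyhedron, then z - p lies in the cone
   spanned by the normals of the constraints active at p, and in that cone |z - p| is controlled
   by the largest inner product of z - p with a generator, which is the largest constraint
   violation at z. There are only finitely many possible active sets, so the constant is uniform. *)

lemma finite_positive_lower_bound:
  fixes f :: "'a \<Rightarrow> real"
  assumes "finite S" and "\<And>x. x \<in> S \<Longrightarrow> 0 < f x"
  obtains \<delta> where "0 < \<delta>" and "\<And>x. x \<in> S \<Longrightarrow> \<delta> \<le> f x"
proof
  show "0 < Min (insert 1 (f ` S))"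
    using assms by (subst Min_gr_iff) auto
  show "Min (insert 1 (f ` S)) \<le> f x" if "x \<in> S" for x
    using assms(1) that by simp
qed

lemma polyhedron_iff_finite_constraints:
  fixes P :: "'a::euclidean_space set"
  shows "polyhedron P \<longleftrightarrow> (\<exists>H. finite H \<and> P = {x. \<forall>(a, b)\<in>H. a \<bullet> x \<le> b})"
proof
  assume "polyhedron P"
  then obtain F where F: "finite F" "P = \<Inter>F" "\<forall>h\<in>F. \<exists>a b. a \<noteq> 0 \<and> h = {x. a \<bullet> x \<le> b}"
    unfolding polyhedron_def by blast
  then obtain a b where ab: "\<And>h. h \<in> F \<Longrightarrow> h = {x. a h \<bullet> x \<le> b h}"
    by metis
  have "P = {x. \<forall>(c, d)\<in>(\<lambda>h. (a h, b h)) ` F. c \<bullet> x \<le> d}"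
    using F(2) ab by blast
  with F(1) show "\<exists>H. finite H \<and> P = {x. \<forall>(a, b)\<in>H. a \<bullet> x \<le> b}"
    by blast
next
  assume "\<exists>H. finite H \<and> P = {x. \<forall>(a, b)\<in>H. a \<bullet> x \<le> b}"
  then obtain H where H: "finite H" "P = {x. \<forall>(a, b)\<in>H. a \<bullet> x \<le> b}"
    by blast
  then have "P = \<Inter>((\<lambda>(a, b). {x. a \<bullet> x \<le> b}) ` H)"
    by auto
  then show "polyhedron P"
    using H(1) by (auto intro: polyhedron_halfspace_le)
qed

lemma polyhedron_contains_small_conic_hull:
  fixes Q :: "'a::euclidean_space set"
  assumes "polyhedron Q" and "0 \<in> Q"
  obtains \<delta> where "0 < \<delta>" and "\<And>v. v \<in> conic hull Q \<Longrightarrow> norm v \<le> \<delta> \<Longrightarrow> v \<in> Q"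
proof -
  obtain H where H: "finite H" "Q = {x. \<forall>(a, b)\<in>H. a \<bullet> x \<le> b}"
    using assms(1) polyhedron_iff_finite_constraints by blast
  have "finite {(a, b)\<in>H. 0 < b}"
    by (rule finite_subset[OF _ H(1)]) auto
  then obtain \<delta> where \<delta>: "0 < \<delta>" "\<And>a b. (a, b) \<in> H \<Longrightarrow> 0 < b \<Longrightarrow> \<delta> \<le> b / (norm a + 1)"
    by (rule finite_positive_lower_bound[where f = "\<lambda>(a, b). b / (norm a + 1)"])
      (auto intro!: divide_pos_pos add_nonneg_pos)
  have "v \<in> Q" if v: "v \<in> conic hull Q" "norm v \<le> \<delta>" for v
  proof -
    obtain c q where cq: "v = c *\<^sub>R q" "0 \<le> c" "q \<in> Q"
      using v(1) by (auto simp: conic_hull_explicit)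
    have "a \<bullet> v \<le> b" if ab: "(a, b) \<in> H" for a b
    proof (cases "0 < b")
      case True
      have "a \<bullet> v \<le> norm a * norm v"
        by (rule norm_cauchy_schwarz)
      also have "\<dots> \<le> (norm a + 1) * \<delta>"
        using v(2) \<delta>(1) by (intro mult_mono) auto
      also have "\<dots> \<le> b"
        using \<delta>(2)[OF ab True] by (simp add: pos_le_divide_eq mult.commute add_nonneg_pos)
      finally show ?thesis .
    next
      case False
      have "b = 0"
        using False assms(2) H(2) ab by fastforce
      moreover have "a \<bullet> q \<le> b"
        using cq(3) H(2) ab by blast
      ultimately show ?thesis
        using cq(1,2) by (simp add: mult_nonneg_nonpos)
    qed
    then show ?thesis
      using H(2) by blast
  qed
  with \<delta>(1) that show ?thesis
    by blast
qed

lemma convex_cone_hull_norm_le_inner: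
  fixes G :: "'a::euclidean_space set"
  assumes "finite G"
  obtains \<delta> where "0 < \<delta>"
    and "\<And>v r. v \<in> convex_cone hull G \<Longrightarrow> 0 \<le> r \<Longrightarrow> (\<And>g. g \<in> G \<Longrightarrow> g \<bullet> v \<le> r) \<Longrightarrow> \<delta> * norm v \<le> r"
proof -
  define Q where "Q = convex hull (insert 0 G)"
  have "polyhedron Q"
    unfolding Q_def using assms by (intro polytope_imp_polyhedron polytope_convex_hull) auto
  moreover have "0 \<in> Q"
    unfolding Q_def by (simp add: hull_inc)
  ultimately obtain \<delta> where \<delta>: "0 < \<delta>" "\<And>v. v \<in> conic hull Q \<Longrightarrow> norm v \<le> \<delta> \<Longrightarrow> v \<in> Q"
    using polyhedron_contains_small_conic_hull by blast
  have cone: "conic hull Q = convex_cone hull G"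
    unfolding Q_def
    by (simp add: convex_cone_hull_separate_nonempty[symmetric] hull_redundant convex_cone_hull_contains_0)
  have "\<delta> * norm v \<le> r"
    if v: "v \<in> convex_cone hull G" "0 \<le> r" "\<And>g. g \<in> G \<Longrightarrow> g \<bullet> v \<le> r" for v r
  proof (cases "v = 0")
    case True
    with v(2) show ?thesis by simp
  next
    case False
    define u where "u = (\<delta> / norm v) *\<^sub>R v"
    have "u \<in> conic hull Q"
      unfolding cone u_def using v(1) \<delta>(1) by (simp add: conicD conic_convex_cone_hull)
    moreover have "norm u = \<delta>"
      using False \<delta>(1) by (simp add: u_def)
    ultimately have "u \<in> Q"
      using \<delta>(2) by simp
    moreover have "Q \<subseteq> {q. q \<bullet> v \<le> r}"
      unfolding Q_def
    proof (rule hull_minimal)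
      show "insert 0 G \<subseteq> {q. q \<bullet> v \<le> r}"
        using v(2,3) by auto
      show "convex {q. q \<bullet> v \<le> r}"
        using convex_halfspace_le[of v r] by (simp add: inner_commute)
    qed
    ultimately have "u \<bullet> v \<le> r"
      by auto
    moreover have "u \<bullet> v = \<delta> * norm v"
      using False by (simp add: u_def dot_square_norm power2_eq_square)
    ultimately show ?thesis
      by simp
  qed
  with \<delta>(1) that show ?thesis
    by blast
qed

lemma separating_hyperplane_closed_convex_cone:
  fixes K :: "'a::euclidean_space set"
  assumes "convex_cone K" and "closed K" and "v \<notin> K"
  obtains e where "\<And>x. x \<in> K \<Longrightarrow> e \<bullet> x \<le> 0" and "0 < e \<bullet> v"
proof -
  have "convex K" "conic K" "0 \<in> K"
    using assms(1) by (auto simp: convex_cone_def conic_contains_0)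
  obtain c d where cd: "c \<bullet> v < d" "\<And>x. x \<in> K \<Longrightarrow> d < c \<bullet> x"
    using separating_hyperplane_closed_point[OF \<open>convex K\<close> assms(2,3)] by blast
  have "d < 0"
    using cd(2) \<open>0 \<in> K\<close> by fastforce
  have "0 \<le> c \<bullet> x" if "x \<in> K" for x
  proof (rule ccontr)
    assume "\<not> 0 \<le> c \<bullet> x"
    then have "(d / (c \<bullet> x)) *\<^sub>R x \<in> K"
      using \<open>conic K\<close> \<open>d < 0\<close> that by (intro conicD) (auto simp: divide_nonpos_neg)
    then show False
      using cd(2) \<open>\<not> 0 \<le> c \<bullet> x\<close> by fastforce
  qed
  then show ?thesis
    using that[of "- c"] cd(1) \<open>d < 0\<close> by auto
qed

lemma polyhedron_feasible_direction:
  fixes H :: "('a::euclidean_space \<times> real) set"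
  assumes "finite H" and P: "P = {x. \<forall>(a, b)\<in>H. a \<bullet> x \<le> b}" and "p \<in> P"
    and active: "\<And>a. (a, a \<bullet> p) \<in> H \<Longrightarrow> a \<bullet> e \<le> 0"
  obtains t where "0 < t" and "p + t *\<^sub>R e \<in> P"
proof -
  have "finite {(a, b)\<in>H. a \<bullet> p < b}"
    by (rule finite_subset[OF _ assms(1)]) auto
  then obtain t where t: "0 < t"
    "\<And>a b. (a, b) \<in> H \<Longrightarrow> a \<bullet> p < b \<Longrightarrow> t \<le> (b - a \<bullet> p) / (\<bar>a \<bullet> e\<bar> + 1)"
    by (rule finite_positive_lower_bound[where f = "\<lambda>(a, b). (b - a \<bullet> p) / (\<bar>a \<bullet> e\<bar> + 1)"])
      (auto intro!: divide_pos_pos add_nonneg_pos)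
  have "a \<bullet> (p + t *\<^sub>R e) \<le> b" if ab: "(a, b) \<in> H" for a b
  proof (cases "a \<bullet> p = b")
    case True
    then show ?thesis
      using active ab \<open>0 < t\<close> by (force simp: inner_add_right mult_nonneg_nonpos)
  next
    case False
    then have "a \<bullet> p < b"
      using \<open>p \<in> P\<close> P ab by fastforce
    then have "t * (\<bar>a \<bullet> e\<bar> + 1) \<le> b - a \<bullet> p"
      using t(2)[OF ab] by (simp add: pos_le_divide_eq add_nonneg_pos)
    moreover have "t * (a \<bullet> e) \<le> t * (\<bar>a \<bullet> e\<bar> + 1)"
      using \<open>0 < t\<close> by (intro mult_left_mono) auto
    ultimately show ?thesis
      by (simp add: inner_add_right)
  qed
  with \<open>0 < t\<close> that P show ?thesis
    by blast
qed

lemma normal_cone_polyhedron_active_constraints: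
  fixes H :: "('a::euclidean_space \<times> real) set"
  assumes "finite H" and P: "P = {x. \<forall>(a, b)\<in>H. a \<bullet> x \<le> b}" and "p \<in> P"
    and normal: "\<And>w. w \<in> P \<Longrightarrow> (z - p) \<bullet> (w - p) \<le> 0"
  shows "z - p \<in> convex_cone hull {a. (a, a \<bullet> p) \<in> H}"
proof (rule ccontr)
  let ?K = "convex_cone hull {a. (a, a \<bullet> p) \<in> H}"
  assume "z - p \<notin> ?K"
  have "finite {a. (a, a \<bullet> p) \<in> H}"
    by (rule finite_subset[OF _ finite_imageI[OF assms(1), of fst]]) force
  then have "closed ?K"
    by (rule closed_convex_cone_hull)
  then obtain e where e: "\<And>x. x \<in> ?K \<Longrightarrow> e \<bullet> x \<le> 0" "0 < e \<bullet> (z - p)"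
    using separating_hyperplane_closed_convex_cone[OF convex_cone_convex_cone_hull] \<open>z - p \<notin> ?K\<close>
    by blast
  have "a \<bullet> e \<le> 0" if "(a, a \<bullet> p) \<in> H" for a
    using e(1)[of a] that by (simp add: hull_inc inner_commute)
  then obtain t where "0 < t" "p + t *\<^sub>R e \<in> P"
    using polyhedron_feasible_direction[OF assms(1) P \<open>p \<in> P\<close>] by blast
  then have "t * (e \<bullet> (z - p)) \<le> 0"
    using normal[of "p + t *\<^sub>R e"] by (simp add: inner_commute)
  with \<open>0 < t\<close> e(2) show False
    by (simp add: mult_le_0_iff)
qed

theorem hoffman_error_bound:
  fixes H :: "('a::euclidean_space \<times> real) set"
  assumes "finite H" and P: "P = {x. \<forall>(a, b)\<in>H. a \<bullet> x \<le> b}" and "P \<noteq> {}"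
  obtains K where "0 < K"
    and "\<And>z r. 0 \<le> r \<Longrightarrow> (\<And>a b. (a, b) \<in> H \<Longrightarrow> a \<bullet> z - b \<le> r) \<Longrightarrow> dist z (closest_point P z) \<le> K * r"
proof -
  have "\<exists>\<delta>>0. \<forall>v r. v \<in> convex_cone hull G \<longrightarrow> 0 \<le> r \<longrightarrow> (\<forall>g\<in>G. g \<bullet> v \<le> r) \<longrightarrow> \<delta> * norm v \<le> r"
    if "G \<subseteq> fst ` H" for G
    using convex_cone_hull_norm_le_inner[of G] finite_subset[OF that finite_imageI[OF assms(1)]]
    by metis
  then obtain \<delta> where \<delta>: "\<And>G. G \<subseteq> fst ` H \<Longrightarrow> 0 < \<delta> G"
    "\<And>G v r. G \<subseteq> fst ` H \<Longrightarrow> v \<in> convex_cone hull G \<Longrightarrow> 0 \<le> r \<Longrightarrow> (\<And>g. g \<in> G \<Longrightarrow> g \<bullet> v \<le> r)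
       \<Longrightarrow> \<delta> G * norm v \<le> r"
    by metis
  obtain \<delta>0 where \<delta>0: "0 < \<delta>0" "\<And>G. G \<subseteq> fst ` H \<Longrightarrow> \<delta>0 \<le> \<delta> G"
    by (rule finite_positive_lower_bound[of "Pow (fst ` H)" \<delta>]) (use assms(1) \<delta>(1) in auto)
  have "polyhedron P"
    using assms(1) P polyhedron_iff_finite_constraints by blast
  then have "closed P" "convex P"
    by (simp_all add: polyhedron_imp_closed polyhedron_imp_convex)
  have "dist z (closest_point P z) \<le> (1 / \<delta>0) * r"
    if r: "0 \<le> r" "\<And>a b. (a, b) \<in> H \<Longrightarrow> a \<bullet> z - b \<le> r" for z r
  proof -
    define p where "p = closest_point P z"
    define G where "G = {a. (a, a \<bullet> p) \<in> H}"
    have "p \<in> P"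
      unfolding p_def using \<open>closed P\<close> \<open>P \<noteq> {}\<close> by (rule closest_point_in_set)
    have "z - p \<in> convex_cone hull G"
      unfolding G_def
    proof (rule normal_cone_polyhedron_active_constraints[OF assms(1) P \<open>p \<in> P\<close>])
      show "(z - p) \<bullet> (w - p) \<le> 0" if "w \<in> P" for w
        unfolding p_def using closest_point_dot[OF \<open>convex P\<close> \<open>closed P\<close> that] .
    qed
    moreover have "G \<subseteq> fst ` H"
      unfolding G_def by force
    moreover have "g \<bullet> (z - p) \<le> r" if "g \<in> G" for g
      using r(2)[of g "g \<bullet> p"] that by (simp add: G_def inner_diff_right)
    ultimately have "\<delta>0 * norm (z - p) \<le> r"
      using \<delta>(2)[of G "z - p" r] \<delta>0(2)[of G] r(1)
      by (meson mult_right_mono norm_ge_zero order_trans)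
    then show ?thesis
      using \<delta>0(1) by (simp add: p_def dist_norm field_simps)
  qed
  with \<delta>0(1) that show ?thesis
    by (metis divide_pos_pos zero_less_one)
qed

lemma constraint_violation_le_setdist:
  fixes a z :: "'a::euclidean_space"
  assumes "closed C" and "C \<noteq> {}" and "C \<subseteq> {x. a \<bullet> x \<le> b}" and "setdist {z} C \<le> s"
  shows "a \<bullet> z - b \<le> norm a * s"
proof -
  define c where "c = closest_point C z"
  have "c \<in> C"
    unfolding c_def using assms(1,2) by (rule closest_point_in_set)
  then have "a \<bullet> z - b \<le> a \<bullet> (z - c)"
    using assms(3) by (auto simp: inner_diff_right)
  also have "\<dots> \<le> norm a * norm (z - c)"
    by (rule norm_cauchy_schwarz)
  also have "\<dots> \<le> norm a * s"
    using assms(4) setdist_closest_point[OF assms(1,2)] by (simp add: c_def dist_norm mult_left_mono)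
  finally show ?thesis .
qed

theorem polyhedron_Int_linearly_regular:
  fixes C1 C2 :: "'a::euclidean_space set"
  assumes "polyhedron C1" and "polyhedron C2" and "C1 \<inter> C2 \<noteq> {}"
  obtains K where "0 < K"
    and "\<And>z. dist z (closest_point (C1 \<inter> C2) z) \<le> K * max (setdist {z} C1) (setdist {z} C2)"
proof -
  obtain H1 where H1: "finite H1" "C1 = {x. \<forall>(a, b)\<in>H1. a \<bullet> x \<le> b}"
    using assms(1) polyhedron_iff_finite_constraints by blast
  obtain H2 where H2: "finite H2" "C2 = {x. \<forall>(a, b)\<in>H2. a \<bullet> x \<le> b}"
    using assms(2) polyhedron_iff_finite_constraints by blast
  have fin: "finite (H1 \<union> H2)"
    using H1(1) H2(1) by simp
  have Int: "C1 \<inter> C2 = {x. \<forall>(a, b)\<in>H1 \<union> H2. a \<bullet> x \<le> b}"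
    using H1(2) H2(2) by auto
  obtain K where K: "0 < K" "\<And>z r. 0 \<le> r \<Longrightarrow> (\<And>a b. (a, b) \<in> H1 \<union> H2 \<Longrightarrow> a \<bullet> z - b \<le> r)
      \<Longrightarrow> dist z (closest_point (C1 \<inter> C2) z) \<le> K * r"
    using hoffman_error_bound[OF fin Int assms(3)] by blast
  define L where "L = 1 + (\<Sum>h\<in>H1 \<union> H2. norm (fst h))"
  have "0 < L"
    unfolding L_def by (simp add: add_pos_nonneg sum_nonneg)
  have norm_le_L: "norm a \<le> L" if "(a, b) \<in> H1 \<union> H2" for a b
    using member_le_sum[of "(a, b)" "H1 \<union> H2" "\<lambda>h. norm (fst h)"] that fin
    by (simp add: L_def)
  have "closed C1" "closed C2" "C1 \<noteq> {}" "C2 \<noteq> {}"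
    using assms by (simp_all add: polyhedron_imp_closed) blast+
  have violation: "a \<bullet> z - b \<le> norm a * max (setdist {z} C1) (setdist {z} C2)"
    if ab: "(a, b) \<in> H1 \<union> H2" for a b z
  proof (cases "(a, b) \<in> H1")
    case True
    with H1(2) show ?thesis
      by (intro constraint_violation_le_setdist[OF \<open>closed C1\<close> \<open>C1 \<noteq> {}\<close>]) auto
  next
    case False
    with ab H2(2) show ?thesis
      by (intro constraint_violation_le_setdist[OF \<open>closed C2\<close> \<open>C2 \<noteq> {}\<close>]) auto
  qed
  have "dist z (closest_point (C1 \<inter> C2) z) \<le> (K * L) * max (setdist {z} C1) (setdist {z} C2)" for z
  proof -
    define s where "s = max (setdist {z} C1) (setdist {z} C2)"
    have "0 \<le> s"
      by (simp add: s_def le_max_iff_disj)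
    have "a \<bullet> z - b \<le> L * s" if "(a, b) \<in> H1 \<union> H2" for a b
      using violation[OF that, of z] mult_right_mono[OF norm_le_L[OF that] \<open>0 \<le> s\<close>]
      by (simp add: s_def)
    then show ?thesis
      using K(2)[of "L * s" z] \<open>0 < L\<close> \<open>0 \<le> s\<close> by (simp add: s_def mult.assoc)
  qed
  with K(1) \<open>0 < L\<close> that show ?thesis
    by (metis mult_pos_pos)
qed

theorem lemma1:
  fixes C1 C2 :: "'a::euclidean_space set"
  assumes "polyhedron C1" and "polyhedron C2" and "C1 \<inter> C2 \<noteq> {}"
  shows "\<exists>M>0. \<forall>x\<in>C1. \<forall>y\<in>C2.
           norm (closest_point C1 x + closest_point C2 y
                 - 2 *\<^sub>R closest_point (C1 \<inter> C2) ((1/2) *\<^sub>R (x + y)))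
           \<le> M * norm (closest_point C1 x - closest_point C2 y)"
proof -
  obtain K where K: "0 < K"
    "\<And>z. dist z (closest_point (C1 \<inter> C2) z) \<le> K * max (setdist {z} C1) (setdist {z} C2)"
    using polyhedron_Int_linearly_regular[OF assms] by blast
  have "norm (x + y - 2 *\<^sub>R closest_point (C1 \<inter> C2) z) \<le> K * norm (x - y)"
    if "x \<in> C1" "y \<in> C2" and z: "z = (1/2) *\<^sub>R (x + y)" for x y z
  proof -
    have "z = midpoint x y"
      by (simp add: z midpoint_def)
    then have "dist z x = dist x y / 2" "dist z y = dist x y / 2"
      by (simp_all add: dist_midpoint)
    then have "max (setdist {z} C1) (setdist {z} C2) \<le> dist x y / 2"
      using that setdist_le_dist[of z "{z}"] by (metis max.bounded_iff singletonI)
    then have "dist z (closest_point (C1 \<inter> C2) z) \<le> K * (dist x y / 2)"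
      using K by (meson mult_left_mono order.strict_implies_order order_trans)
    moreover have "x + y - 2 *\<^sub>R closest_point (C1 \<inter> C2) z = 2 *\<^sub>R (z - closest_point (C1 \<inter> C2) z)"
      by (simp add: z algebra_simps)
    ultimately show ?thesis
      by (simp add: dist_norm)
  qed
  with K(1) show ?thesis
    by (metis closest_point_self)
qed

end
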